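(* Let $(X,\mathtt{d})$ be an instance of metric $k$-center clustering with $z$ outliers with optimal clusters $C_1,\dots,C_k$ and optimal radius $r_{\mathtt{opt}}$, and run Algorithm 1 (described in the context) with parameters $\epsilon>0$, $\eta\in(0,1/2)$, $t\in\mathbb{Z}^+$. Then in each round $j$ of the loop (Step 3), either the event $\mathtt{d}(Q_j,E)\leq 2r_{\mathtt{opt}}$ happens (with $E$ the current set before the round's sampling), or with probability at least $1-\eta$ the event $\lambda_j(E)\geq\lambda_{j-1}(E)+1$ happens.
   Context: Let $(X,\mathtt{d})$ be a finite metric space with $|X|=n$ and let $k,z$ be positive integers with $z<n$. The $k$-center clustering with $z$ outliers problem asks for $X'\subseteq X$ with $|X'|\geq n-z$ and centers $c_1,\dots,c_k\in X$ minimizing $\max_{p\in X'}\min_j\mathtt{d}(p,c_j)$; $r_{\mathtt{opt}}$ is the optimal value, $X_{\mathtt{opt}}$ a fixed optimal inlier set of size $n-z$, and $C_1,\dots,C_k$ the optimal clusters partitioning $X_{\mathtt{opt}}$, each contained in a ball of radius $r_{\mathtt{opt}}$ centered at a point of $X$. For sets $X_1,X_2\subseteq X$, $\mathtt{d}(X_1,X_2)=\min_{p\in X_1,q\in X_2}\mathtt{d}(p,q)$ and $\mathtt{d}(p,E)=\min_{q\in E}\mathtt{d}(p,q)$. Algorithm 1: Let $\gamma=z/n$, $E=\emptyset$. Set $j=1$ and add to $E$ $\frac{1}{1-\gamma}\log\frac1\eta$ vertices selected uniformly at random from $X$. Step 3: while $j<t$: set $j=j+1$; let $Q_j$ be the set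 of the $(1+\epsilon)z$ vertices of $X$ farthest from $E$; add to $E$ $\frac{1+\epsilon}{\epsilon}\log\frac1\eta$ vertices selected uniformly at random from $Q_j$. Output $E$. $\lambda_j(E)$ denotes the number of indices $l\in\{1,\dots,k\}$ with $C_l\cap E\neq\emptyset$ at the beginning of the $j$-th round of Step 3 (so $\lambda_j(E)$ vs. $\lambda_{j-1}(E)$ compares the counts after and before the sampling of round $j$). *)

theory Defs
  imports "HOL-Probability.Probability"
begin

definition metric_on :: "'a set \<Rightarrow> ('a \<Rightarrow> 'a \<Rightarrow> real) \<Rightarrow> bool" where
  "metric_on X d \<longleftrightarrow>
     (\<forall>p\<in>X. \<forall>q\<in>X. d p q \<ge> 0 \<and> d p q = d q p \<and> (d p q = 0 \<longleftrightarrow> p = q)) \<and>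
     (\<forall>p\<in>X. \<forall>q\<in>X. \<forall>r\<in>X. d p r \<le> d p q + d q r)"

definition set_dist :: "('a \<Rightarrow> 'a \<Rightarrow> real) \<Rightarrow> 'a set \<Rightarrow> 'a set \<Rightarrow> real" where
  "set_dist d A B = Min {d p q | p q. p \<in> A \<and> q \<in> B}"

definition kzc_cost :: "('a \<Rightarrow> 'a \<Rightarrow> real) \<Rightarrow> nat \<Rightarrow> 'a set \<Rightarrow> (nat \<Rightarrow> 'a) \<Rightarrow> real" where
  "kzc_cost d k Y c = Max ((\<lambda>p. Min ((\<lambda>j. d p (c j)) ` {..<k})) ` Y)"

definition kzc_opt :: "'a set \<Rightarrow> ('a \<Rightarrow> 'a \<Rightarrow> real) \<Rightarrow> nat \<Rightarrow> nat \<Rightarrow> real" where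
  "kzc_opt X d k z = Min {kzc_cost d k Y c | Y c. Y \<subseteq> X \<and> card Y \<ge> card X - z \<and> (\<forall>j<k. c j \<in> X)}"

definition lam :: "nat \<Rightarrow> (nat \<Rightarrow> 'a set) \<Rightarrow> 'a set \<Rightarrow> nat" where
  "lam k C E = card {l \<in> {..<k}. C l \<inter> E \<noteq> {}}"

definition farthest_set :: "('a \<Rightarrow> 'a \<Rightarrow> real) \<Rightarrow> 'a set \<Rightarrow> 'a set \<Rightarrow> nat \<Rightarrow> 'a set \<Rightarrow> bool" where
  "farthest_set d X E s Q \<longleftrightarrow> Q \<subseteq> X \<and> card Q = s \<and>
     (\<forall>q\<in>Q. \<forall>p\<in>X - Q. set_dist d {p} E \<le> set_dist d {q} E)"

end

theory Submission
  imports Defs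
begin

text \<open>If every point of Q is farther than 2 r_opt from E, then Q misses E, so Q is not all of X
  and has at least (1 + \<epsilon>) z points; moreover every inlier in Q lies in a cluster that E
  misses, because a cluster has diameter at most 2 r_opt. At most z points of Q are outliers, so
  each uniform sample from Q misses the inliers with probability at most 1 / (1 + \<epsilon>), and all
  (1 + \<epsilon>) / \<epsilon> ln (1 / \<eta>) samples miss them with probability at most \<eta>.\<close>

lemma inverse_one_plus_power_le:
  fixes \<epsilon> \<eta> :: real
  assumes "\<epsilon> > 0" "\<eta> > 0" and m: "(1 + \<epsilon>) / \<epsilon> * ln (1 / \<eta>) \<le> real m"
  shows "(1 / (1 + \<epsilon>)) ^ m \<le> \<eta>"
proof -
  have "\<epsilon> / (1 + \<epsilon>) \<le> ln (1 + \<epsilon>)"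
    using ln_le_minus_one[of "1 / (1 + \<epsilon>)"] assms(1) by (simp add: ln_div field_simps)
  then have "real m * (\<epsilon> / (1 + \<epsilon>)) \<le> real m * ln (1 + \<epsilon>)"
    by (rule mult_left_mono) simp
  moreover have "ln (1 / \<eta>) \<le> real m * (\<epsilon> / (1 + \<epsilon>))"
    using m assms(1) by (simp add: field_simps)
  ultimately have "ln (1 / \<eta>) \<le> ln ((1 + \<epsilon>) ^ m)"
    using assms(1) by (simp add: ln_realpow)
  then have "1 / \<eta> \<le> (1 + \<epsilon>) ^ m"
    using assms by simp
  then show ?thesis
    using assms by (simp add: field_simps)
qed

lemma prob_Pi_pmf_of_set_hits:
  assumes "finite I" "finite Q" "Q \<noteq> {}"
  shows "measure_pmf.prob (Pi_pmf I dflt (\<lambda>_. pmf_of_set Q)) {S. \<exists>i\<in>I. S i \<in> G}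
           = 1 - (real (card (Q - G)) / real (card Q)) ^ card I"
proof -
  let ?M = "Pi_pmf I dflt (\<lambda>_. pmf_of_set Q)"
  have "{S. \<exists>i\<in>I. S i \<in> G} = UNIV - Pi I (\<lambda>_. - G)" by auto
  then have "measure_pmf.prob ?M {S. \<exists>i\<in>I. S i \<in> G} = 1 - measure_pmf.prob ?M (Pi I (\<lambda>_. - G))"
    using measure_pmf.prob_compl[of "Pi I (\<lambda>_. - G)" ?M] by simp
  also have "measure_pmf.prob ?M (Pi I (\<lambda>_. - G)) = (\<Prod>i\<in>I. measure_pmf.prob (pmf_of_set Q) (- G))"
    using assms(1) by (rule measure_Pi_pmf_Pi)
  also have "\<dots> = (real (card (Q - G)) / real (card Q)) ^ card I"
    using assms(2,3) by (simp add: measure_pmf_of_set Diff_eq Int_commute)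
  finally show ?thesis .
qed

lemma uniform_samples_hit_prob_ge:
  fixes \<epsilon> \<eta> :: real
  assumes "finite Q" "Q \<noteq> {}" "\<epsilon> > 0" "\<eta> > 0"
    and "card (Q - G) \<le> z" "(1 + \<epsilon>) * real z \<le> real (card Q)"
    and "(1 + \<epsilon>) / \<epsilon> * ln (1 / \<eta>) \<le> real m"
  shows "1 - \<eta> \<le> measure_pmf.prob (Pi_pmf {..<m} dflt (\<lambda>_. pmf_of_set Q)) {S. \<exists>i\<in>{..<m}. S i \<in> G}"
proof -
  have "0 < card Q" using assms(1,2) by (simp add: card_gt_0_iff)
  then have "real (card (Q - G)) / real (card Q) \<le> real z / real (card Q)"
    using assms(5) by (simp add: divide_right_mono)
  also have "\<dots> \<le> 1 / (1 + \<epsilon>)"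
    using assms(3,6) \<open>0 < card Q\<close> by (simp add: field_simps)
  finally have "(real (card (Q - G)) / real (card Q)) ^ m \<le> (1 / (1 + \<epsilon>)) ^ m"
    by (rule power_mono) simp
  also have "\<dots> \<le> \<eta>"
    using assms(3,4,7) by (rule inverse_one_plus_power_le)
  finally show ?thesis
    using prob_Pi_pmf_of_set_hits[OF _ assms(1,2), of "{..<m}" dflt G] by simp
qed

lemma set_dist_le:
  assumes "finite A" "finite B" "p \<in> A" "q \<in> B"
  shows "set_dist d A B \<le> d p q"
proof -
  have "{d p q | p q. p \<in> A \<and> q \<in> B} = (\<lambda>(p, q). d p q) ` (A \<times> B)" by auto
  then show ?thesis
    unfolding set_dist_def using assms by (auto intro: Min_le)
qed

lemma farthest_set_card_eq:
  assumes "farthest_set d X E (min (card X) s) Q" "finite X" "E \<subseteq> X" "E \<noteq> {}" "Q \<inter> E = {}"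
  shows "card Q = s"
proof -
  have card_Q: "card Q = min (card X) s" and "Q \<subset> X"
    using assms unfolding farthest_set_def by auto
  then have "card Q < card X" using assms(2) psubset_card_mono by metis
  then show ?thesis using card_Q by simp
qed

lemma metric_on_dist_le_via_center:
  assumes "metric_on X d" "p \<in> X" "q \<in> X" "c \<in> X" "d p c \<le> r" "d q c \<le> r"
  shows "d p q \<le> 2 * r"
proof -
  have "d p q \<le> d p c + d c q" and "d c q = d q c"
    using assms(1-4) unfolding metric_on_def by blast+
  with assms(5,6) show ?thesis by linarith
qed

lemma metric_on_radius_nonneg:
  assumes "metric_on X d" "\<forall>l<k. C l \<subseteq> X" "\<forall>l<k. \<exists>c\<in>X. \<forall>p\<in>C l. d p c \<le> r"
    and "(\<Union>l<k. C l) \<noteq> {}"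
  shows "0 \<le> r"
proof -
  obtain l p c where "l < k" "p \<in> C l" "c \<in> X" "d p c \<le> r"
    using assms(3,4) by blast
  with assms(1,2) show ?thesis unfolding metric_on_def by (meson order_trans subsetD)
qed

lemma exists_cluster_disjoint_if_far:
  assumes "metric_on X d" "\<forall>l<k. C l \<subseteq> X" "\<forall>l<k. \<exists>c\<in>X. \<forall>p\<in>C l. d p c \<le> r"
    and "E \<subseteq> X" "q \<in> (\<Union>l<k. C l)" "\<forall>e\<in>E. 2 * r < d q e"
  shows "\<exists>l<k. q \<in> C l \<and> C l \<inter> E = {}"
proof -
  obtain l c where l: "l < k" "q \<in> C l" and c: "c \<in> X" "\<forall>p\<in>C l. d p c \<le> r"
    using assms(3,5) by blast
  have "d q e \<le> 2 * r" if "e \<in> C l" for e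
    using metric_on_dist_le_via_center[OF assms(1), of q e c r] assms(2) l c that by blast
  with assms(4,6) l show ?thesis by force
qed

lemma lam_union_ge_Suc:
  assumes "l < k" "C l \<inter> E = {}" "C l \<inter> F \<noteq> {}"
  shows "lam k C E + 1 \<le> lam k C (E \<union> F)"
proof -
  have "insert l {l \<in> {..<k}. C l \<inter> E \<noteq> {}} \<subseteq> {l \<in> {..<k}. C l \<inter> (E \<union> F) \<noteq> {}}"
    using assms by blast
  then have "card (insert l {l \<in> {..<k}. C l \<inter> E \<noteq> {}}) \<le> lam k C (E \<union> F)"
    unfolding lam_def by (intro card_mono) auto
  then show ?thesis
    using assms(2) unfolding lam_def by simp
qed

theorem lemma7:
  fixes X :: "'a set" and d :: "'a \<Rightarrow> 'a \<Rightarrow> real" and k z :: nat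
    and Xopt :: "'a set" and C :: "nat \<Rightarrow> 'a set"
    and \<epsilon> \<eta> :: real and E Q :: "'a set"
  assumes fin: "finite X" and met: "metric_on X d"
    and kpos: "k > 0" and zpos: "z > 0" and zn: "z < card X"
    and Xopt: "Xopt \<subseteq> X" "card Xopt = card X - z"
    and part: "(\<Union>l<k. C l) = Xopt" "\<forall>l<k. \<forall>l'<k. l \<noteq> l' \<longrightarrow> C l \<inter> C l' = {}"
    and balls: "\<forall>l<k. \<exists>c\<in>X. \<forall>p\<in>C l. d p c \<le> kzc_opt X d k z"
    and eps: "\<epsilon> > 0" and eta: "0 < \<eta>" "\<eta> < 1/2"
    and E: "E \<subseteq> X" "E \<noteq> {}"
    and Q: "farthest_set d X E (min (card X) (nat \<lceil>(1 + \<epsilon>) * real z\<rceil>)) Q"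
  shows "set_dist d Q E \<le> 2 * kzc_opt X d k z \<or>
         measure_pmf.prob
           (Pi_pmf {..<nat \<lceil>(1 + \<epsilon>) / \<epsilon> * ln (1 / \<eta>)\<rceil>} undefined (\<lambda>_. pmf_of_set Q))
           {S. lam k C (E \<union> S ` {..<nat \<lceil>(1 + \<epsilon>) / \<epsilon> * ln (1 / \<eta>)\<rceil>}) \<ge> lam k C E + 1}
         \<ge> 1 - \<eta>"
proof (cases "set_dist d Q E \<le> 2 * kzc_opt X d k z")
  case False
  define r where "r = kzc_opt X d k z"
  define m where "m = nat \<lceil>(1 + \<epsilon>) / \<epsilon> * ln (1 / \<eta>)\<rceil>"
  define s where "s = nat \<lceil>(1 + \<epsilon>) * real z\<rceil>"
  have QX: "Q \<subseteq> X" using Q unfolding farthest_set_def by blast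
  have "finite Q" "finite E" using QX E(1) fin finite_subset by blast+
  then have far: "\<forall>q\<in>Q. \<forall>e\<in>E. 2 * r < d q e"
    using set_dist_le[of Q E _ _ d] False unfolding r_def by fastforce
  have CX: "\<forall>l<k. C l \<subseteq> X" using part(1) Xopt(1) by blast
  have "Xopt \<noteq> {}" using Xopt(2) zn by auto
  then have "0 \<le> r" using metric_on_radius_nonneg[OF met CX balls[folded r_def]] part(1) by blast
  then have "Q \<inter> E = {}" using far met E(1) unfolding metric_on_def by fastforce
  then have card_Q: "card Q = s"
    using farthest_set_card_eq[OF Q[folded s_def] fin E] by blast
  have card_Q_ge: "(1 + \<epsilon>) * real z \<le> real (card Q)" unfolding card_Q s_def by linarith
  moreover have "0 < (1 + \<epsilon>) * real z" using eps zpos by simp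
  ultimately have "Q \<noteq> {}" by auto
  have "card (Q - Q \<inter> Xopt) \<le> card (X - Xopt)" using QX fin by (intro card_mono) auto
  also have "\<dots> = z" using Xopt fin zn by (simp add: card_Diff_subset finite_subset)
  finally have "card (Q - Q \<inter> Xopt) \<le> z" .
  moreover have "(1 + \<epsilon>) / \<epsilon> * ln (1 / \<eta>) \<le> real m" unfolding m_def by (rule real_nat_ceiling_ge)
  ultimately have "1 - \<eta> \<le> measure_pmf.prob (Pi_pmf {..<m} undefined (\<lambda>_. pmf_of_set Q))
                                 {S. \<exists>i\<in>{..<m}. S i \<in> Q \<inter> Xopt}"
    using card_Q_ge by (intro uniform_samples_hit_prob_ge[OF \<open>finite Q\<close> \<open>Q \<noteq> {}\<close> eps eta(1)])
  also have "\<dots> \<le> measure_pmf.prob (Pi_pmf {..<m} undefined (\<lambda>_. pmf_of_set Q))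
                     {S. lam k C (E \<union> S ` {..<m}) \<ge> lam k C E + 1}"
  proof (intro measure_pmf.finite_measure_mono subsetI, clarsimp)
    fix S i assume "i < m" "S i \<in> Q" "S i \<in> Xopt"
    then obtain l where "l < k" "S i \<in> C l" "C l \<inter> E = {}"
      using exists_cluster_disjoint_if_far[OF met CX balls[folded r_def] E(1)] part(1) far by blast
    with \<open>i < m\<close> show "Suc (lam k C E) \<le> lam k C (E \<union> S ` {..<m})"
      using lam_union_ge_Suc[of l k C E "S ` {..<m}"] by auto
  qed simp
  finally show ?thesis unfolding m_def by (rule disjI2)
qed simp

end
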